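(* There is a sufficiently small absolute constant $c_1>0$ such that the following holds for $d$ sufficiently large. Let $K=\exp(c_1 s)$. For any fixed $\mathbf{A}\in\mathcal{A}_{\mathsf{suc}}$ and any fixed unit vectors $\mathbf{y}_1,\dots,\mathbf{y}_K\in\mathbb{S}^d$, $$\Pr_{\mathbf{v}\sim\frac1{\sqrt d}\mathcal{H}_d}\Big[\|\mathbf{A}\mathbf{x}_{\mathbf{A},\mathbf{v}}\|_\infty\le\xi'\ \wedge\ \|\mathbf{x}_{\mathbf{A},\mathbf{v}}-\mathbf{y}_i\|_2>d^{-8}\ \ \forall i\in[K]\Big]\ge\frac18.$$
   Context: Setting: $d$ large, $\delta\in(0,1)$, $k=d^{1-\delta-o(1)}$, $s=d^{1-\delta/2}\log^2 d$, $\xi=2\exp(-\log^5 d)$, $\xi'=\sqrt d\xi$, $\mathcal{H}_d=\{-1,1\}^d$, $\mathbb{S}^d$ the unit sphere in $\mathbb{R}^d$. A fixed deterministic $(k,n)$-protocol for the correlated orthogonal vector game is given: Alice, on $\mathbf{A}\in\{-1,1\}^{(d/2)\times d}$, sends $\mathbf{M}_\mathbf{A}\in\{0,1\}^{kd}$; after receiving Bob's $\mathbf{v}\in\frac1{\sqrt d}\mathcal{H}_d$, she sends $\mathbf{R}_{\mathbf{A},\mathbf{v}}=(\mathbf{r}_1,\dots,\mathbf{r}_n)$ with each $\mathbf{r}_i$ a row of $\mathbf{A}$ or $\mathsf{nil}$; Bob outputs $\mathbf{x}_{\mathbf{M},\mathbf{v},\mathbf{R}}\in\mathbb{S}^d$,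 a unit vector defined for every $\mathbf{M}\in\{0,1\}^{kd}$, $\mathbf{v}$, $\mathbf{R}\in(\{-1,1\}^d\cup\{\mathsf{nil}\})^n$. Write $\mathbf{x}_{\mathbf{A},\mathbf{v}}=\mathbf{x}_{\mathbf{M}_\mathbf{A},\mathbf{v},\mathbf{R}_{\mathbf{A},\mathbf{v}}}$. The protocol succeeds on $(\mathbf{A},\mathbf{v})$ if $\|\mathbf{A}\mathbf{x}_{\mathbf{A},\mathbf{v}}\|_\infty\le\xi'$ and $|\langle\mathbf{v},\mathbf{x}_{\mathbf{A},\mathbf{v}}\rangle|\ge\sqrt{s/d}$, and it succeeds with probability at least $1/2$ over uniform $(\mathbf{A},\mathbf{v})$. $\mathcal{A}_{\mathsf{suc}}$ is the set of $\mathbf{A}\in\{-1,1\}^{(d/2)\times d}$ on which the protocol succeeds with probability at least $1/4$ over uniform $\mathbf{v}\in\frac1{\sqrt d}\mathcal{H}_d$. *)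

theory Defs
  imports Complex_Main "HOL-Library.FuncSet"
begin

text \<open>Vectors in R^d are functions nat => real supported on {0..<d};
  a (d/2) x d matrix is nat => nat => real, row i being the function A i.\<close>

definition unif_prob :: "'a set \<Rightarrow> ('a \<Rightarrow> bool) \<Rightarrow> real" where
  "unif_prob S P = real (card {x \<in> S. P x}) / real (card S)"

definition hcube :: "nat \<Rightarrow> (nat \<Rightarrow> real) set" where
  "hcube d = {0..<d} \<rightarrow>\<^sub>E {- 1 / sqrt (real d), 1 / sqrt (real d)}"

definition signvecs :: "nat \<Rightarrow> (nat \<Rightarrow> real) set" where
  "signvecs d = {0..<d} \<rightarrow>\<^sub>E {- 1, 1}"

definition sign_mats :: "nat \<Rightarrow> (nat \<Rightarrow> nat \<Rightarrow> real) set" where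
  "sign_mats d = {0..<d div 2} \<rightarrow>\<^sub>E signvecs d"

definition unit_vec :: "nat \<Rightarrow> (nat \<Rightarrow> real) \<Rightarrow> bool" where
  "unit_vec d x \<longleftrightarrow> (\<forall>j\<ge>d. x j = 0) \<and> (\<Sum>j<d. (x j)\<^sup>2) = 1"

definition s_par :: "nat \<Rightarrow> real \<Rightarrow> real" where
  "s_par d \<delta> = real d powr (1 - \<delta> / 2) * (ln (real d))\<^sup>2"

definition xi :: "nat \<Rightarrow> real" where
  "xi d = 2 * exp (- ((ln (real d)) ^ 5))"

definition xi' :: "nat \<Rightarrow> real" where
  "xi' d = sqrt (real d) * xi d"

definition succeeds :: "nat \<Rightarrow> real \<Rightarrow> (nat \<Rightarrow> nat \<Rightarrow> real) \<Rightarrow> (nat \<Rightarrow> real) \<Rightarrow> (nat \<Rightarrow> real) \<Rightarrow> bool" where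
  "succeeds d \<delta> A v x \<longleftrightarrow>
     (\<forall>i<d div 2. \<bar>\<Sum>j<d. A i j * x j\<bar> \<le> xi' d) \<and>
     \<bar>\<Sum>j<d. v j * x j\<bar> \<ge> sqrt (s_par d \<delta> / real d)"

text \<open>Alice's second message: n entries, each a row of A or nil (None)\<close>
definition valid_resp :: "nat \<Rightarrow> nat \<Rightarrow> (nat \<Rightarrow> nat \<Rightarrow> real) \<Rightarrow> (nat \<Rightarrow> real) option list \<Rightarrow> bool" where
  "valid_resp d n A R \<longleftrightarrow> length R = n \<and> (\<forall>r\<in>set R. r = None \<or> (\<exists>i<d div 2. r = Some (A i)))"

definition bob_dom :: "nat \<Rightarrow> nat \<Rightarrow> (nat \<Rightarrow> real) option list \<Rightarrow> bool" where
  "bob_dom d n R \<longleftrightarrow> length R = n \<and> (\<forall>r\<in>set R. r = None \<or> (\<exists>u\<in>signvecs d. r = Some u))"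

definition out_vec where
  "out_vec msg resp bob A v = bob (msg A) v (resp A v)"

definition good_protocol ::
  "nat \<Rightarrow> real \<Rightarrow> nat \<Rightarrow> nat \<Rightarrow> ((nat \<Rightarrow> nat \<Rightarrow> real) \<Rightarrow> bool list)
   \<Rightarrow> ((nat \<Rightarrow> nat \<Rightarrow> real) \<Rightarrow> (nat \<Rightarrow> real) \<Rightarrow> (nat \<Rightarrow> real) option list)
   \<Rightarrow> (bool list \<Rightarrow> (nat \<Rightarrow> real) \<Rightarrow> (nat \<Rightarrow> real) option list \<Rightarrow> (nat \<Rightarrow> real)) \<Rightarrow> bool" where
  "good_protocol d \<delta> k n msg resp bob \<longleftrightarrow>
     (\<forall>A\<in>sign_mats d. length (msg A) = k * d) \<and>
     (\<forall>A\<in>sign_mats d. \<forall>v\<in>hcube d. valid_resp d n A (resp A v)) \<and>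
     (\<forall>M v R. length M = k * d \<longrightarrow> v \<in> hcube d \<longrightarrow> bob_dom d n R \<longrightarrow> unit_vec d (bob M v R)) \<and>
     unif_prob (sign_mats d \<times> hcube d)
        (\<lambda>(A, v). succeeds d \<delta> A v (out_vec msg resp bob A v)) \<ge> 1 / 2"

definition A_suc where
  "A_suc d \<delta> msg resp bob =
     {A \<in> sign_mats d. unif_prob (hcube d) (\<lambda>v. succeeds d \<delta> A v (out_vec msg resp bob A v)) \<ge> 1 / 4}"

end

theory Submission
  imports Defs "HOL-Probability.Hoeffding"
begin

text \<open>If the protocol succeeds on v, then \<open>|\<langle>v, x\<^sub>A\<^sub>,\<^sub>v\<rangle>| \<ge> \<surd>(s/d)\<close>; since v is a unit
  vector, an output within \<open>d\<^sup>-\<^sup>8\<close> of some \<open>y\<^sub>i\<close> forces \<open>|\<langle>v, y\<^sub>i\<rangle>| \<ge> \<surd>(s/d) - d\<^sup>-\<^sup>8\<close>.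
  For a fixed unit vector \<open>y\<^sub>i\<close> this has probability at most \<open>2 exp(-s/8)\<close> over the
  hypercube by Hoeffding's inequality, so a union bound over the \<open>K = exp(s/32)\<close> vectors
  removes at most probability \<open>1/8\<close> from the success probability \<open>1/4\<close> guaranteed by
  \<open>A \<in> A_suc\<close>.\<close>

lemma cosh_le_exp_half_square: "cosh (x::real) \<le> exp (x\<^sup>2 / 2)"
proof -
  have nonneg_case: "cosh x \<le> exp (x\<^sup>2 / 2)" if "x \<ge> 0" for x :: real
  proof -
    \<comment> \<open>Hoeffding's lemma for a fair coin with step \<open>2x\<close>\<close>
    have "-(2*x) * (1/2) + ln (1 + (1/2) * (exp (2*x) - 1)) \<le> (2*x)\<^sup>2 / 8"
      by (rule Hoeffdings_lemma_aux) (use that in auto)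
    then have "exp (ln ((1 + exp (2*x)) / 2)) \<le> exp (x + x\<^sup>2 / 2)"
      by (simp add: power2_eq_square field_simps)
    then have "(1 + exp (2*x)) / 2 \<le> exp (x + x\<^sup>2 / 2)"
      by (simp add: add_pos_pos)
    then have "(1 + exp (2*x)) / 2 * exp (-x) \<le> exp (x + x\<^sup>2 / 2) * exp (-x)"
      by simp
    moreover have "(1 + exp (2*x)) / 2 * exp (-x) = cosh x"
      by (simp add: cosh_def field_simps flip: exp_add)
    moreover have "exp (x + x\<^sup>2 / 2) * exp (-x) = exp (x\<^sup>2 / 2)"
      by (simp flip: exp_add)
    ultimately show ?thesis by simp
  qed
  show ?thesis
    using nonneg_case[of x] nonneg_case[of "-x"] by (cases "x \<ge> 0") auto
qed

lemma finite_hcube: "finite (hcube d)"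
  by (simp add: hcube_def finite_PiE)

lemma card_hcube: "d > 0 \<Longrightarrow> card (hcube d) = 2 ^ d"
  by (simp add: hcube_def card_PiE) (simp add: numeral_2_eq_2)

lemma unif_prob_hcube: "d > 0 \<Longrightarrow> unif_prob (hcube d) P = real (card {v \<in> hcube d. P v}) / 2 ^ d"
  by (simp add: unif_prob_def card_hcube)

lemma sum_square_hcube:
  assumes "d > 0" "v \<in> hcube d"
  shows "(\<Sum>j<d. (v j)\<^sup>2) = 1"
proof -
  have "(v j)\<^sup>2 = 1 / real d" if "j < d" for j
    using assms that by (auto simp: hcube_def PiE_def Pi_def power2_eq_square)
  then show ?thesis
    using assms by simp
qed

lemma abs_inner_hcube_le:
  assumes "d > 0" "v \<in> hcube d"
  shows "\<bar>\<Sum>j<d. v j * z j\<bar> \<le> sqrt (\<Sum>j<d. (z j)\<^sup>2)"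
proof -
  have "(\<Sum>j<d. v j * z j)\<^sup>2 \<le> (\<Sum>j<d. (v j)\<^sup>2) * (\<Sum>j<d. (z j)\<^sup>2)"
    by (rule Cauchy_Schwarz_ineq_sum)
  then have "(\<Sum>j<d. v j * z j)\<^sup>2 \<le> (\<Sum>j<d. (z j)\<^sup>2)"
    using sum_square_hcube[OF assms] by simp
  then show ?thesis
    by (metis real_sqrt_abs real_sqrt_le_iff)
qed

lemma abs_inner_hcube_ge_if_close:
  assumes "d > 0" "v \<in> hcube d"
    and "\<bar>\<Sum>j<d. v j * x j\<bar> \<ge> \<theta>" "sqrt (\<Sum>j<d. (x j - y j)\<^sup>2) \<le> \<epsilon>"
  shows "\<bar>\<Sum>j<d. v j * y j\<bar> \<ge> \<theta> - \<epsilon>"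
proof -
  have "\<bar>\<Sum>j<d. v j * (x j - y j)\<bar> \<le> \<epsilon>"
    using abs_inner_hcube_le[OF assms(1,2), of "\<lambda>j. x j - y j"] assms(4) by simp
  moreover have "(\<Sum>j<d. v j * (x j - y j)) = (\<Sum>j<d. v j * x j) - (\<Sum>j<d. v j * y j)"
    by (simp add: right_diff_distrib sum_subtractf)
  ultimately show ?thesis
    using assms(3) by linarith
qed

lemma card_hcube_inner_ge_le:
  assumes d: "d > 0" and y: "(\<Sum>j<d. (y j)\<^sup>2) = 1" and t: "t \<ge> 0"
  shows "real (card {v \<in> hcube d. (\<Sum>j<d. v j * y j) \<ge> t}) \<le> 2 ^ d * exp (- real d * t\<^sup>2 / 2)"
proof -
  define a where "a = 1 / sqrt (real d)"
  define l where "l = real d * t"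
  have a2: "a\<^sup>2 = 1 / real d"
    using d by (simp add: a_def power_divide)
  let ?S = "{v \<in> hcube d. (\<Sum>j<d. v j * y j) \<ge> t}"
  have "real (card ?S) * exp (l * t) = (\<Sum>v\<in>?S. exp (l * t))"
    by simp
  also have "\<dots> \<le> (\<Sum>v\<in>?S. exp (l * (\<Sum>j<d. v j * y j)))"
    using t by (intro sum_mono) (auto simp: l_def intro: mult_left_mono)
  also have "\<dots> \<le> (\<Sum>v\<in>hcube d. exp (l * (\<Sum>j<d. v j * y j)))"
    by (intro sum_mono2 finite_hcube) auto
  also have "\<dots> = (\<Sum>v\<in>hcube d. \<Prod>j<d. exp (l * y j * v j))"
    by (intro sum.cong refl) (simp add: exp_sum sum_distrib_left mult_ac)
  also have "\<dots> = (\<Prod>j<d. \<Sum>u\<in>{-a, a}. exp (l * y j * u))"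
    unfolding hcube_def a_def by (subst prod_sum_PiE) (auto simp: atLeast0LessThan)
  also have "\<dots> = (\<Prod>j<d. 2 * cosh (l * y j * a))"
    using d by (intro prod.cong refl) (auto simp: a_def cosh_def add.commute)
  also have "\<dots> \<le> (\<Prod>j<d. 2 * exp ((l * y j * a)\<^sup>2 / 2))"
    by (intro prod_mono) (auto simp: cosh_le_exp_half_square)
  also have "\<dots> = 2 ^ d * exp (\<Sum>j<d. (l * y j * a)\<^sup>2 / 2)"
    by (simp add: prod.distrib exp_sum)
  also have "(\<Sum>j<d. (l * y j * a)\<^sup>2 / 2) = l\<^sup>2 * a\<^sup>2 / 2 * (\<Sum>j<d. (y j)\<^sup>2)"
    by (simp add: sum_distrib_left power_mult_distrib mult_ac)
  also have "\<dots> = real d * t\<^sup>2 / 2"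
    unfolding y a2 l_def using d by (simp add: power2_eq_square)
  finally have "real (card ?S) * exp (l * t) \<le> 2 ^ d * exp (real d * t\<^sup>2 / 2)" .
  then have "real (card ?S) \<le> 2 ^ d * exp (real d * t\<^sup>2 / 2) * exp (- (l * t))"
    by (simp add: exp_minus field_simps)
  also have "\<dots> = 2 ^ d * exp (- real d * t\<^sup>2 / 2)"
    by (simp add: l_def power2_eq_square mult.assoc flip: exp_add)
  finally show ?thesis .
qed

lemma card_hcube_abs_inner_ge_le:
  assumes d: "d > 0" and y: "(\<Sum>j<d. (y j)\<^sup>2) = 1" and t: "t \<ge> 0"
  shows "real (card {v \<in> hcube d. \<bar>\<Sum>j<d. v j * y j\<bar> \<ge> t}) \<le> 2 * 2 ^ d * exp (- real d * t\<^sup>2 / 2)"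
proof -
  let ?U = "\<lambda>y. {v \<in> hcube d. (\<Sum>j<d. v j * y j) \<ge> t}"
  have neg_y: "(\<Sum>j<d. (- y j)\<^sup>2) = 1"
    using y by simp
  have "{v \<in> hcube d. \<bar>\<Sum>j<d. v j * y j\<bar> \<ge> t} \<subseteq> ?U y \<union> ?U (\<lambda>j. - y j)"
    by (auto simp: sum_negf abs_if)
  then have "card {v \<in> hcube d. \<bar>\<Sum>j<d. v j * y j\<bar> \<ge> t} \<le> card (?U y \<union> ?U (\<lambda>j. - y j))"
    by (intro card_mono) (simp_all add: finite_hcube)
  also have "\<dots> \<le> card (?U y) + card (?U (\<lambda>j. - y j))"
    by (rule card_Un_le)
  finally show ?thesis
    using card_hcube_inner_ge_le[OF d y t] card_hcube_inner_ge_le[OF d neg_y t] by linarith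
qed

lemma unif_prob_hcube_far_from_all_ge:
  fixes x :: "(nat \<Rightarrow> real) \<Rightarrow> nat \<Rightarrow> real" and y :: "'i \<Rightarrow> nat \<Rightarrow> real"
  assumes d: "d > 0" and I: "finite I" and y: "\<And>i. i \<in> I \<Longrightarrow> (\<Sum>j<d. (y i j)\<^sup>2) = 1"
    and succ: "unif_prob (hcube d) (\<lambda>v. Q v \<and> \<bar>\<Sum>j<d. v j * x v j\<bar> \<ge> \<theta>) \<ge> p"
    and gap: "\<epsilon> \<le> \<theta>" and tail: "real (card I) * (2 * exp (- real d * (\<theta> - \<epsilon>)\<^sup>2 / 2)) \<le> q"
  shows "unif_prob (hcube d) (\<lambda>v. Q v \<and> (\<forall>i\<in>I. sqrt (\<Sum>j<d. (x v j - y i j)\<^sup>2) > \<epsilon>)) \<ge> p - q"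
proof -
  let ?H = "hcube d"
  let ?S = "{v \<in> ?H. Q v \<and> \<bar>\<Sum>j<d. v j * x v j\<bar> \<ge> \<theta>}"
  let ?G = "{v \<in> ?H. Q v \<and> (\<forall>i\<in>I. sqrt (\<Sum>j<d. (x v j - y i j)\<^sup>2) > \<epsilon>)}"
  let ?B = "\<lambda>i. {v \<in> ?H. \<bar>\<Sum>j<d. v j * y i j\<bar> \<ge> \<theta> - \<epsilon>}"
  have "?S \<subseteq> ?G \<union> (\<Union>i\<in>I. ?B i)"
  proof
    fix v assume v: "v \<in> ?S"
    show "v \<in> ?G \<union> (\<Union>i\<in>I. ?B i)"
    proof (cases "\<forall>i\<in>I. sqrt (\<Sum>j<d. (x v j - y i j)\<^sup>2) > \<epsilon>")
      case False
      then obtain i where "i \<in> I" "sqrt (\<Sum>j<d. (x v j - y i j)\<^sup>2) \<le> \<epsilon>"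
        by (auto simp: not_less)
      then show ?thesis
        using v abs_inner_hcube_ge_if_close[OF d, where x = "x v" and y = "y i"] by auto
    qed (use v in auto)
  qed
  then have "card ?S \<le> card (?G \<union> (\<Union>i\<in>I. ?B i))"
    using I by (intro card_mono) (simp_all add: finite_hcube)
  also have "\<dots> \<le> card ?G + card (\<Union>i\<in>I. ?B i)"
    by (rule card_Un_le)
  also have "card (\<Union>i\<in>I. ?B i) \<le> (\<Sum>i\<in>I. card (?B i))"
    by (rule card_UN_le[OF I])
  finally have "real (card ?S) \<le> real (card ?G) + (\<Sum>i\<in>I. real (card (?B i)))"
    unfolding of_nat_sum[symmetric] of_nat_add[symmetric] of_nat_le_iff by simp
  also have "(\<Sum>i\<in>I. real (card (?B i))) \<le> (\<Sum>i\<in>I. 2 * 2 ^ d * exp (- real d * (\<theta> - \<epsilon>)\<^sup>2 / 2))"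
    using gap by (intro sum_mono card_hcube_abs_inner_ge_le[OF d y]) auto
  also have "\<dots> = 2 ^ d * (real (card I) * (2 * exp (- real d * (\<theta> - \<epsilon>)\<^sup>2 / 2)))"
    by simp
  also have "\<dots> \<le> 2 ^ d * q"
    using tail by (intro mult_left_mono) auto
  finally have "real (card ?S) / 2 ^ d \<le> (real (card ?G) + 2 ^ d * q) / 2 ^ d"
    by (intro divide_right_mono) auto
  also have "\<dots> = real (card ?G) / 2 ^ d + q"
    by (simp add: add_divide_distrib)
  finally show ?thesis
    using succ by (simp add: unif_prob_hcube[OF d])
qed

lemma exp_numeral_eq_power: "exp (numeral n :: real) = exp 1 ^ numeral n"
  using exp_of_nat_mult[of "numeral n" "1::real"] by simp

lemma ln_ge_8: "real d \<ge> 6561 \<Longrightarrow> ln (real d) \<ge> 8"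
proof -
  assume d: "real d \<ge> 6561"
  have "exp (8::real) \<le> 3 ^ 8"
    unfolding exp_numeral_eq_power by (intro power_mono exp_le) auto
  also have "\<dots> \<le> real d"
    using d by simp
  finally show ?thesis
    using d by (simp add: ln_ge_iff)
qed

lemma s_par_ge_64:
  assumes "real d \<ge> 6561" "\<delta> < 1"
  shows "s_par d \<delta> \<ge> 64"
proof -
  have "real d powr (1 - \<delta>/2) \<ge> 1"
    using assms by (intro ge_one_powr_ge_zero) auto
  moreover have "(ln (real d))\<^sup>2 \<ge> 8\<^sup>2"
    using ln_ge_8[OF assms(1)] by (intro power_mono) auto
  ultimately have "real d powr (1 - \<delta>/2) * (ln (real d))\<^sup>2 \<ge> 1 * 64"
    by (intro mult_mono) auto
  then show ?thesis
    by (simp add: s_par_def)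
qed

lemma sqrt_s_par_div:
  assumes "d > 0"
  shows "sqrt (s_par d \<delta> / real d) = real d powr (-\<delta>/4) * ln (real d)"
proof -
  have "s_par d \<delta> / real d = real d powr (1 - \<delta>/2) / real d * (ln (real d))\<^sup>2"
    by (simp add: s_par_def)
  also have "real d powr (1 - \<delta>/2) / real d = (real d powr (-\<delta>/4))\<^sup>2"
    using assms by (simp add: power2_eq_square powr_diff powr_minus_divide flip: powr_add)
  finally have "s_par d \<delta> / real d = (real d powr (-\<delta>/4) * ln (real d))\<^sup>2"
    by (simp add: power_mult_distrib)
  moreover have "real d powr (-\<delta>/4) * ln (real d) \<ge> 0"
    using assms by simp
  ultimately show ?thesis
    by simp
qed

lemma powr_neg_8_le_half_sqrt_s_par:
  assumes d: "real d \<ge> 6561" and \<delta>: "0 < \<delta>" "\<delta> < 1"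
  shows "real d powr (-8) \<le> sqrt (s_par d \<delta> / real d) / 2"
proof -
  have "real d powr (-8) \<le> real d powr (-\<delta>/4)"
    using d \<delta> by (intro powr_mono) auto
  also have "\<dots> \<le> real d powr (-\<delta>/4) * ln (real d) / 2"
    using ln_ge_8[OF d] mult_left_mono[of 2 "ln (real d)" "real d powr (-\<delta>/4)"] by simp
  finally show ?thesis
    using d by (simp add: sqrt_s_par_div)
qed

lemma nat_ceiling_exp_le: "a \<ge> 0 \<Longrightarrow> real (nat \<lceil>exp a\<rceil>) \<le> 2 * exp a"
proof -
  assume "a \<ge> 0"
  then have "1 \<le> exp a"
    by simp
  moreover have "real (nat \<lceil>exp a\<rceil>) = real_of_int \<lceil>exp a\<rceil>"
    by (simp add: order_less_imp_le)
  ultimately show ?thesis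
    using of_int_ceiling_le_add_one[of "exp a"] by linarith
qed

lemma union_bound_term_le:
  assumes d: "real d \<ge> 6561" and \<delta>: "0 < \<delta>" "\<delta> < 1"
  defines "\<theta> \<equiv> sqrt (s_par d \<delta> / real d)"
  shows "real (nat \<lceil>exp (1/32 * s_par d \<delta>)\<rceil>) * (2 * exp (- real d * (\<theta> - real d powr (-8))\<^sup>2 / 2))
           \<le> 1/8"
proof -
  let ?s = "s_par d \<delta>"
  have s64: "?s \<ge> 64"
    using s_par_ge_64 d \<delta> by simp
  have s_div_nonneg: "?s / real d \<ge> 0"
    using s64 by (intro divide_nonneg_nonneg) auto
  then have "\<theta>\<^sup>2 = ?s / real d"
    by (simp add: \<theta>_def)
  moreover have "(\<theta> / 2)\<^sup>2 \<le> (\<theta> - real d powr (-8))\<^sup>2"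
    using powr_neg_8_le_half_sqrt_s_par[OF d \<delta>] s_div_nonneg
    by (intro power_mono) (auto simp: \<theta>_def)
  ultimately have "real d * (\<theta> - real d powr (-8))\<^sup>2 \<ge> ?s / 4"
    using d mult_left_mono[of "(\<theta> / 2)\<^sup>2" "(\<theta> - real d powr (-8))\<^sup>2" "real d"]
    by (simp add: power_divide)
  then have "exp (- real d * (\<theta> - real d powr (-8))\<^sup>2 / 2) \<le> exp (- ?s / 8)"
    by simp
  then have "real (nat \<lceil>exp (1/32 * ?s)\<rceil>) * (2 * exp (- real d * (\<theta> - real d powr (-8))\<^sup>2 / 2))
      \<le> 2 * exp (1/32 * ?s) * (2 * exp (- ?s / 8))"
    using nat_ceiling_exp_le[of "1/32 * ?s"] s64 by (intro mult_mono) auto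
  also have "\<dots> = 4 * exp (- (3 * ?s / 32))"
    by (simp flip: exp_add)
  also have "\<dots> \<le> 4 * exp (- 6)"
    using s64 by simp
  also have "\<dots> \<le> 1/8"
  proof -
    have "(2::real) ^ 6 \<le> exp 1 ^ 6"
      using exp_ge_add_one_self[of 1] by (intro power_mono) auto
    also have "\<dots> = exp 6"
      by (rule exp_numeral_eq_power[symmetric])
    finally show ?thesis
      by (simp add: exp_minus field_simps)
  qed
  finally show ?thesis .
qed

theorem lemma5p3:
  shows "\<exists>c1::real. c1 > 0 \<and>
    (\<forall>\<delta>::real. 0 < \<delta> \<and> \<delta> < 1 \<longrightarrow>
     (\<forall>kf :: nat \<Rightarrow> nat.
        ((\<lambda>d. ln (real (kf d)) / ln (real d)) \<longlongrightarrow> 1 - \<delta>) at_top \<longrightarrow>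
        (\<exists>d0::nat. \<forall>d\<ge>d0. \<forall>n msg resp bob.
           good_protocol d \<delta> (kf d) n msg resp bob \<longrightarrow>
           (\<forall>A \<in> A_suc d \<delta> msg resp bob.
              \<forall>y :: nat \<Rightarrow> nat \<Rightarrow> real.
                (\<forall>i\<in>{1..nat \<lceil>exp (c1 * s_par d \<delta>)\<rceil>}. unit_vec d (y i)) \<longrightarrow>
                unif_prob (hcube d)
                  (\<lambda>v. (\<forall>i<d div 2. \<bar>\<Sum>j<d. A i j * out_vec msg resp bob A v j\<bar> \<le> xi' d) \<and>
                       (\<forall>i\<in>{1..nat \<lceil>exp (c1 * s_par d \<delta>)\<rceil>}.
                          sqrt (\<Sum>j<d. (out_vec msg resp bob A v j - y i j)\<^sup>2) > real d powr (-8)))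
                \<ge> 1 / 8))))"
  apply (intro exI[of _ "1/32::real"] conjI allI impI exI[of _ "6561::nat"] ballI)
   apply simp
  subgoal premises prems for \<delta> kf d n msg resp bob A y
  proof -
    have d: "real d \<ge> 6561" and \<delta>0: "0 < \<delta>" and \<delta>1: "\<delta> < 1"
      using prems(1,3) by auto
    have "sqrt (s_par d \<delta> / real d) \<ge> 0"
      using s_par_ge_64[OF d \<delta>1] by (intro real_sqrt_ge_zero divide_nonneg_nonneg) auto
    then have gap: "real d powr (-8) \<le> sqrt (s_par d \<delta> / real d)"
      using powr_neg_8_le_half_sqrt_s_par[OF d \<delta>0 \<delta>1] by linarith
    have "(1/8::real) \<le> 1/4 - 1/8"
      by simp
    then show ?thesis
      by (rule order_trans[OF _ unif_prob_hcube_far_from_all_ge])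
        (use d gap prems(5,6) union_bound_term_le[OF d \<delta>0 \<delta>1] in
          \<open>auto simp: A_suc_def succeeds_def unit_vec_def\<close>)
  qed
  done

end
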